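(* Let $S$ be a quasi-tree of a map $\mathcal M$ and let $e$ be an edge of $\mathcal M$. If $e\in S$, then $\widetilde{\Lambda}(\mathcal M/ e, S\setminus \{e\})=\widetilde{\Lambda}(\mathcal M, S)- e$. If $e\notin S$, then $\widetilde{\Lambda}(\mathcal M\setminus e, S)=\widetilde{\Lambda}(\mathcal M, S)- e$.
   Context: A map is a triple $\mathcal M=(B,\sigma,\alpha)$ with $B$ finite, $\sigma,\alpha\in\mathrm{Sym}(B)$, $\alpha$ a fixed-point-free involution, $\langle\sigma,\alpha\rangle$ transitive on $B$; permutations compose as functions. Edges are the cycles of $\alpha$; $\underline b=\{b,\alpha(b)\}$. For $\mu\in\mathrm{Sym}(B)$, $B'\subseteq B$, $\mu_{|B'}(b)=\mu^k(b)$ with $k$ least positive such that $\mu^k(b)\in B'$. Deletion: $\mathcal M\setminus e=(B\setminus e,\sigma_{|B\setminus e},\alpha_{|B\setminus e})$; contraction: $\mathcal M/e=(B\setminus e,(\sigma\alpha)_{|B\setminus e}\alpha_{|B\setminus e},\alpha_{|B\setminus e})$. The tour of a set $F$ of edges is $\tau$ with $\tau(b)=\sigma(\alpha(b))$ if $\underline b\in F$ and $\tau(b)=\sigma(b)$ otherwise; a quasi-tree is a set of edges whose tour is a single cycle on the flag set. For a quasi-tree $S$ with tour $\tau$, $\widetilde\Lambda(\mathcal M,S)$ is the chord diagram with the flags placed on a circle in the cyclic order of $\tau$, a chord joining the two flags of each edge, chords of edges in $S$ colored $1$ and the others colored $2$. $\widetilde\Lambda(\mathcal M,S)-e$ denotes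 the bicolored chord diagram with the chord of $e$ removed. *)

theory Defs
  imports "HOL-Combinatorics.Permutations"
begin

text \<open>Permutations are total functions
  that are bijections of B and the identity outside B ('permutes').\<close>

definition is_map :: "'b set \<Rightarrow> ('b \<Rightarrow> 'b) \<Rightarrow> ('b \<Rightarrow> 'b) \<Rightarrow> bool" where
  "is_map B \<sigma> \<alpha> \<longleftrightarrow> finite B \<and> \<sigma> permutes B \<and> \<alpha> permutes B
     \<and> (\<forall>b\<in>B. \<alpha> b \<noteq> b \<and> \<alpha> (\<alpha> b) = b)
     \<and> (\<forall>b\<in>B. \<forall>c\<in>B. (b, c) \<in> {(x, y). y = \<sigma> x \<or> y = \<alpha> x}\<^sup>*)"

definition edge_of :: "('b \<Rightarrow> 'b) \<Rightarrow> 'b \<Rightarrow> 'b set" where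
  "edge_of \<alpha> b = {b, \<alpha> b}"

definition edges :: "'b set \<Rightarrow> ('b \<Rightarrow> 'b) \<Rightarrow> 'b set set" where
  "edges B \<alpha> = edge_of \<alpha> ` B"

definition restr_perm :: "('b \<Rightarrow> 'b) \<Rightarrow> 'b set \<Rightarrow> 'b \<Rightarrow> 'b" where
  "restr_perm \<mu> B' b =
     (if b \<in> B' then (\<mu> ^^ (LEAST k. 0 < k \<and> (\<mu> ^^ k) b \<in> B')) b else b)"

definition delete_edge :: "'b set \<Rightarrow> ('b \<Rightarrow> 'b) \<Rightarrow> ('b \<Rightarrow> 'b) \<Rightarrow> 'b set
    \<Rightarrow> 'b set \<times> ('b \<Rightarrow> 'b) \<times> ('b \<Rightarrow> 'b)" where
  "delete_edge B \<sigma> \<alpha> e = (B - e, restr_perm \<sigma> (B - e), restr_perm \<alpha> (B - e))"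

definition contract_edge :: "'b set \<Rightarrow> ('b \<Rightarrow> 'b) \<Rightarrow> ('b \<Rightarrow> 'b) \<Rightarrow> 'b set
    \<Rightarrow> 'b set \<times> ('b \<Rightarrow> 'b) \<times> ('b \<Rightarrow> 'b)" where
  "contract_edge B \<sigma> \<alpha> e =
     (B - e, restr_perm (\<sigma> \<circ> \<alpha>) (B - e) \<circ> restr_perm \<alpha> (B - e), restr_perm \<alpha> (B - e))"

definition tour :: "'b set \<Rightarrow> ('b \<Rightarrow> 'b) \<Rightarrow> ('b \<Rightarrow> 'b) \<Rightarrow> 'b set set \<Rightarrow> 'b \<Rightarrow> 'b" where
  "tour B \<sigma> \<alpha> F b =
     (if b \<in> B then (if edge_of \<alpha> b \<in> F then \<sigma> (\<alpha> b) else \<sigma> b) else b)"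

definition quasi_tree :: "'b set \<Rightarrow> ('b \<Rightarrow> 'b) \<Rightarrow> ('b \<Rightarrow> 'b) \<Rightarrow> 'b set set \<Rightarrow> bool" where
  "quasi_tree B \<sigma> \<alpha> S \<longleftrightarrow> S \<subseteq> edges B \<alpha>
     \<and> (\<forall>b\<in>B. \<forall>c\<in>B. \<exists>n. (tour B \<sigma> \<alpha> S ^^ n) b = c)"

text \<open>A (labelled) bicolored chord diagram: a set of points on a circle, the cyclic
  successor of each point on the circle, the chord involution pairing the endpoints
  of each chord, and the colour of the chord at each point. All components are
  normalised outside the point set so that HOL equality is equality of diagrams.\<close>
type_synonym 'b chord_diagram = "'b set \<times> ('b \<Rightarrow> 'b) \<times> ('b \<Rightarrow> 'b) \<times> ('b \<Rightarrow> nat)"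

definition mk_diagram :: "'b set \<Rightarrow> ('b \<Rightarrow> 'b) \<Rightarrow> ('b \<Rightarrow> 'b) \<Rightarrow> ('b \<Rightarrow> nat) \<Rightarrow> 'b chord_diagram" where
  "mk_diagram P succ ch col =
     (P, (\<lambda>b. if b \<in> P then succ b else b), (\<lambda>b. if b \<in> P then ch b else b),
      (\<lambda>b. if b \<in> P then col b else 0))"

definition Lambda :: "'b set \<Rightarrow> ('b \<Rightarrow> 'b) \<Rightarrow> ('b \<Rightarrow> 'b) \<Rightarrow> 'b set set \<Rightarrow> 'b chord_diagram" where
  "Lambda B \<sigma> \<alpha> S =
     mk_diagram B (tour B \<sigma> \<alpha> S) \<alpha> (\<lambda>b. if edge_of \<alpha> b \<in> S then 1 else 2)"

definition remove_chord :: "'b chord_diagram \<Rightarrow> 'b set \<Rightarrow> 'b chord_diagram" where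
  "remove_chord D e = (case D of (P, succ, ch, col) \<Rightarrow>
     mk_diagram (P - e) (restr_perm succ (P - e)) ch col)"

end

theory Submission
  imports Defs "HOL-Combinatorics.Cycles"
begin

text \<open>Off the edge e, contraction and deletion leave alpha unchanged, so it suffices to show
  that the tour of the minor is the first-return map (restr_perm) of the old tour tau to B - e.
  Let mu be sigma alpha if e is in S and sigma otherwise. Then tau agrees with mu on the flags
  of e, and at a flag x off e, tau x is mu applied to x or to alpha x, while the new tour at x
  is the first-return map of mu at that same point. So after one step the two orbits coincide
  until they re-enter B - e.\<close>

lemma restr_perm_apply:
  assumes "b \<in> B'" and "\<mu> b \<in> B'"
  shows "restr_perm \<mu> B' b = \<mu> b"
proof -
  have "(LEAST k. 0 < k \<and> (\<mu> ^^ k) b \<in> B') = 1"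
    by (rule Least_equality) (use assms in auto)
  then show ?thesis
    using assms(1) by (simp add: restr_perm_def)
qed

lemma permutation_returns:
  assumes "permutation \<mu>" and "c \<in> B'"
  shows "\<exists>k. 0 < k \<and> (\<mu> ^^ k) c \<in> B'"
proof -
  obtain n where "\<mu> ^^ n = id" and "n > 0"
    using permutation_is_nilpotent[OF assms(1)] by blast
  then show ?thesis
    using assms(2) by (intro exI[of _ n]) simp
qed

lemma funpow_eq_before_return:
  assumes "0 < n" and "\<tau> b = \<mu> c" and agree: "\<And>x. x \<notin> B' \<Longrightarrow> \<tau> x = \<mu> x"
    and outside: "\<And>j. 0 < j \<Longrightarrow> j < n \<Longrightarrow> (\<mu> ^^ j) c \<notin> B'"
  shows "(\<tau> ^^ n) b = (\<mu> ^^ n) c"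
  using assms(1) outside
proof (induction n rule: nat_induct_non_zero)
  case 1
  then show ?case using assms(2) by simp
next
  case (Suc n)
  then have "(\<tau> ^^ n) b = (\<mu> ^^ n) c" and "(\<mu> ^^ n) c \<notin> B'"
    by simp_all
  then show ?case using agree by simp
qed

lemma restr_perm_eq_if_merge:
  assumes "permutation \<mu>" and "b \<in> B'" and "c \<in> B'"
    and "\<tau> b = \<mu> c" and agree: "\<And>x. x \<notin> B' \<Longrightarrow> \<tau> x = \<mu> x"
  shows "restr_perm \<tau> B' b = restr_perm \<mu> B' c"
proof -
  define k where "k = (LEAST k. 0 < k \<and> (\<mu> ^^ k) c \<in> B')"
  have k: "0 < k" "(\<mu> ^^ k) c \<in> B'"
    using LeastI_ex[OF permutation_returns[OF assms(1,3)]] by (simp_all add: k_def)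
  have before: "(\<mu> ^^ j) c \<notin> B'" if "0 < j" "j < k" for j
    using not_less_Least[of j] that by (auto simp: k_def)
  have same: "(\<tau> ^^ j) b = (\<mu> ^^ j) c" if "0 < j" "j \<le> k" for j
    using funpow_eq_before_return[of j \<tau> b \<mu> c B'] that assms(4) agree before by simp
  have "(LEAST j. 0 < j \<and> (\<tau> ^^ j) b \<in> B') = k"
  proof (rule Least_equality)
    show "0 < k \<and> (\<tau> ^^ k) b \<in> B'"
      using k same[of k] by simp
    show "k \<le> j" if "0 < j \<and> (\<tau> ^^ j) b \<in> B'" for j
      using that same[of j] before[of j] by (metis leI less_imp_le)
  qed
  then show ?thesis
    using assms(2,3) k same[of k] by (simp add: restr_perm_def k_def)
qed

lemma mk_diagram_cong:
  assumes "\<And>x. x \<in> P \<Longrightarrow> succ x = succ' x" and "\<And>x. x \<in> P \<Longrightarrow> ch x = ch' x"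
    and "\<And>x. x \<in> P \<Longrightarrow> col x = col' x"
  shows "mk_diagram P succ ch col = mk_diagram P succ' ch' col'"
  using assms by (auto simp: mk_diagram_def fun_eq_iff)

lemma remove_chord_Lambda:
  "remove_chord (Lambda B \<sigma> \<alpha> S) e =
     mk_diagram (B - e) (restr_perm (tour B \<sigma> \<alpha> S) (B - e)) \<alpha>
       (\<lambda>b. if edge_of \<alpha> b \<in> S then 1 else 2)"
proof -
  have "(\<lambda>b. if b \<in> B then tour B \<sigma> \<alpha> S b else b) = tour B \<sigma> \<alpha> S"
    by (auto simp: fun_eq_iff tour_def)
  then show ?thesis
    unfolding remove_chord_def Lambda_def
    by (auto simp: mk_diagram_def fun_eq_iff)
qed

context
  fixes B :: "'b set" and \<sigma> \<alpha> :: "'b \<Rightarrow> 'b" and e :: "'b set"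
  assumes map: "is_map B \<sigma> \<alpha>" and edge: "e \<in> edges B \<alpha>"
begin

lemma
  shows finite_flags: "finite B" and \<sigma>_permutes: "\<sigma> permutes B" and \<alpha>_permutes: "\<alpha> permutes B"
    and \<alpha>_involution: "\<And>b. b \<in> B \<Longrightarrow> \<alpha> (\<alpha> b) = b"
  using map by (auto simp: is_map_def)

lemma edge_subset_flags: "e \<subseteq> B"
  using edge \<alpha>_permutes by (auto simp: edges_def edge_of_def permutes_in_image)

lemma edge_of_flag_of_edge: "x \<in> e \<Longrightarrow> edge_of \<alpha> x = e"
  using edge \<alpha>_involution by (auto simp: edges_def edge_of_def)

lemma \<alpha>_off_edge:
  assumes "x \<in> B - e"
  shows "\<alpha> x \<in> B - e"
proof -
  have "\<alpha> x \<in> e \<Longrightarrow> x \<in> e"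
    using edge_of_flag_of_edge[of "\<alpha> x"] assms \<alpha>_involution by (auto simp: edge_of_def)
  then show ?thesis
    using assms \<alpha>_permutes by (auto simp: permutes_in_image)
qed

lemma restr_perm_\<alpha>_off_edge: "x \<in> B - e \<Longrightarrow> restr_perm \<alpha> (B - e) x = \<alpha> x"
  by (rule restr_perm_apply) (use \<alpha>_off_edge in auto)

lemma edge_of_restr_perm_\<alpha>: "x \<in> B - e \<Longrightarrow> edge_of (restr_perm \<alpha> (B - e)) x = edge_of \<alpha> x"
  by (simp add: edge_of_def restr_perm_\<alpha>_off_edge)

lemma tour_off_flags_if_in:
  assumes "e \<in> S" and "x \<notin> B - e"
  shows "tour B \<sigma> \<alpha> S x = (\<sigma> \<circ> \<alpha>) x"
  using assms edge_subset_flags edge_of_flag_of_edge \<alpha>_permutes \<sigma>_permutes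
  by (auto simp: tour_def permutes_not_in)

lemma tour_off_flags_if_notin:
  assumes "e \<notin> S" and "x \<notin> B - e"
  shows "tour B \<sigma> \<alpha> S x = \<sigma> x"
  using assms edge_subset_flags edge_of_flag_of_edge \<sigma>_permutes
  by (auto simp: tour_def permutes_not_in)

lemma tour_contract_edge:
  assumes "e \<in> S" and x: "x \<in> B - e"
  shows "tour (B - e) (restr_perm (\<sigma> \<circ> \<alpha>) (B - e) \<circ> restr_perm \<alpha> (B - e))
           (restr_perm \<alpha> (B - e)) (S - {e}) x = restr_perm (tour B \<sigma> \<alpha> S) (B - e) x"
proof -
  have perm: "permutation (\<sigma> \<circ> \<alpha>)"
    using permutes_compose[OF \<alpha>_permutes \<sigma>_permutes] finite_flags permutation_permutes by blast
  note agree = tour_off_flags_if_in[OF \<open>e \<in> S\<close>]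
  have "edge_of \<alpha> x \<noteq> e"
    using x by (auto simp: edge_of_def)
  moreover have "\<alpha> (\<alpha> x) = x"
    using x \<alpha>_involution by simp
  moreover have "restr_perm (tour B \<sigma> \<alpha> S) (B - e) x =
      restr_perm (\<sigma> \<circ> \<alpha>) (B - e) (if edge_of \<alpha> x \<in> S then x else \<alpha> x)"
    by (rule restr_perm_eq_if_merge[OF perm x])
      (use x \<alpha>_off_edge \<alpha>_involution agree in \<open>auto simp: tour_def\<close>)
  ultimately show ?thesis
    using x \<alpha>_off_edge by (simp add: tour_def edge_of_restr_perm_\<alpha> restr_perm_\<alpha>_off_edge)
qed

lemma tour_delete_edge:
  assumes "e \<notin> S" and x: "x \<in> B - e"
  shows "tour (B - e) (restr_perm \<sigma> (B - e)) (restr_perm \<alpha> (B - e)) S x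
           = restr_perm (tour B \<sigma> \<alpha> S) (B - e) x"
proof -
  have perm: "permutation \<sigma>"
    using \<sigma>_permutes finite_flags permutation_permutes by blast
  have "restr_perm (tour B \<sigma> \<alpha> S) (B - e) x =
      restr_perm \<sigma> (B - e) (if edge_of \<alpha> x \<in> S then \<alpha> x else x)"
    by (rule restr_perm_eq_if_merge[OF perm x])
      (use x \<alpha>_off_edge tour_off_flags_if_notin[OF \<open>e \<notin> S\<close>] in \<open>auto simp: tour_def\<close>)
  then show ?thesis
    using x by (simp add: tour_def edge_of_restr_perm_\<alpha> restr_perm_\<alpha>_off_edge)
qed

lemma Lambda_contract_edge:
  assumes "e \<in> S"
  shows "Lambda (B - e) (restr_perm (\<sigma> \<circ> \<alpha>) (B - e) \<circ> restr_perm \<alpha> (B - e))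
           (restr_perm \<alpha> (B - e)) (S - {e}) = remove_chord (Lambda B \<sigma> \<alpha> S) e"
  unfolding remove_chord_Lambda unfolding Lambda_def
  by (rule mk_diagram_cong)
    (auto simp: tour_contract_edge[OF assms] restr_perm_\<alpha>_off_edge edge_of_restr_perm_\<alpha>
       edge_of_def)

lemma Lambda_delete_edge:
  assumes "e \<notin> S"
  shows "Lambda (B - e) (restr_perm \<sigma> (B - e)) (restr_perm \<alpha> (B - e)) S
           = remove_chord (Lambda B \<sigma> \<alpha> S) e"
  unfolding remove_chord_Lambda unfolding Lambda_def
  by (rule mk_diagram_cong)
    (auto simp: tour_delete_edge[OF assms] restr_perm_\<alpha>_off_edge edge_of_restr_perm_\<alpha>)

end

theorem lemma10:
  fixes B :: "'b set" and \<sigma> \<alpha> :: "'b \<Rightarrow> 'b" and S :: "'b set set" and e :: "'b set"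
  assumes "is_map B \<sigma> \<alpha>"
    and "quasi_tree B \<sigma> \<alpha> S"
    and "e \<in> edges B \<alpha>"
  shows "(e \<in> S \<longrightarrow>
            (case contract_edge B \<sigma> \<alpha> e of (B', \<sigma>', \<alpha>') \<Rightarrow> Lambda B' \<sigma>' \<alpha>' (S - {e}))
              = remove_chord (Lambda B \<sigma> \<alpha> S) e)
       \<and> (e \<notin> S \<longrightarrow>
            (case delete_edge B \<sigma> \<alpha> e of (B', \<sigma>', \<alpha>') \<Rightarrow> Lambda B' \<sigma>' \<alpha>' S)
              = remove_chord (Lambda B \<sigma> \<alpha> S) e)"
  using Lambda_contract_edge[OF assms(1,3)] Lambda_delete_edge[OF assms(1,3)]
  by (simp add: contract_edge_def delete_edge_def)

end
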